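(* Fix a constant $\gamma > 0$. In the real-time oblivious erasure correction protocol on $k$ message symbols, in order for the receiver to recover a $(1-\gamma)$ fraction of the message symbols, the feedback channel needs to successfully transmit at most $O(1)$ bits.
   Context: Real-time oblivious erasure correction protocol on $k$ message symbols $x_1,\dots,x_k \in \mathbb{F}_2$: a sender transmits an unbounded stream of encoding symbols over a binary erasure channel with unknown erasure rate. The sender maintains a counter $r$ (initially $0$), the number of symbols the receiver has decoded as reported via feedback. Each encoding symbol uses degree $d(r) = \lfloor (k+1)/(k-r) \rfloor$ for $0 \le r \le k-2$ (and $d(k-1)=k$): the sender picks $d=d(r)$ indices uniformly at random from $\{1,\dots,k\}$ and sends the XOR of the corresponding symbols together with the indices and $d$. The receiver processes each received encoding symbol immediately: if exactly one of its indices is unknown it recovers that symbol by XORing with the known symbols and increments its count $r$; otherwise it discards the symbol. The receiver sends a one-bit feedback message (acknowledgement) to the sender exactly when the value of $\lfloor (k+1)/(k-r)\rfloor$ changes (i.e., the current degree differs from it), and the sender then updates its counter. *)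

theory Defs
  imports Complex_Main
begin

text \<open>Degree used by the sender when its counter is r (k message symbols):
  d(r) = floor((k+1)/(k-r)) for r \<le> k-2, and d(k-1) = k.
  (For r \<ge> k the value is irrelevant; natural-number division by 0 gives 0.)\<close>
definition deg :: "nat \<Rightarrow> nat \<Rightarrow> nat" where
  "deg k r = (if Suc r = k then k else (k + 1) div (k - r))"

text \<open>A run of the receiver is described by its decoded-symbol count over time:
  rs t is the number of decoded symbols after t received encoding symbols have
  been processed.\<close>
definition valid_run :: "(nat \<Rightarrow> nat) \<Rightarrow> bool" where
  "valid_run rs \<longleftrightarrow> rs 0 = 0 \<and> (\<forall>t. rs (Suc t) = rs t \<or> rs (Suc t) = Suc (rs t))"

text \<open>Number of one-bit feedback messages sent during the first T processing steps:
  an acknowledgement is sent at step t exactly when the degree value for the new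
  count differs from the degree currently in use (that of the previous count,
  since every earlier acknowledgement was delivered).\<close>
definition feedback_count :: "nat \<Rightarrow> (nat \<Rightarrow> nat) \<Rightarrow> nat \<Rightarrow> nat" where
  "feedback_count k rs T = card {t. t < T \<and> deg k (rs (Suc t)) \<noteq> deg k (rs t)}"

end

theory Submission
  imports Defs
begin

text \<open>Feedback is only sent when a symbol is decoded, so distinct feedback steps happen at
  distinct counts r, each being a point where the degree d jumps.  On the counts
  r < (1 - \<gamma>) k the degree is monotone, so the number of its jumps is at most the final
  degree, and there k - r > \<gamma> k - 1, whence d(r) \<le> (k + 1) / (k - r) = O(1/\<gamma>).  When
  \<gamma> k is small, the trivial bound of k distinct counts is itself O(1/\<gamma>).\<close>

lemma card_changes_le_of_mono_on:
  fixes g :: "nat \<Rightarrow> nat"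
  assumes "mono_on {..n} g"
  shows "card {r. r < n \<and> g (Suc r) \<noteq> g r} \<le> g n - g 0"
  using assms
proof (induction n)
  case 0
  then show ?case by simp
next
  case (Suc n)
  have IH: "card {r. r < n \<and> g (Suc r) \<noteq> g r} \<le> g n - g 0"
    using Suc.IH mono_on_subset[OF Suc.prems, of "{..n}"] by auto
  have mono: "g 0 \<le> g n" "g n \<le> g (Suc n)"
    using Suc.prems by (auto intro: mono_onD)
  have split: "{r. r < Suc n \<and> g (Suc r) \<noteq> g r} =
      {r. r < n \<and> g (Suc r) \<noteq> g r} \<union> (if g (Suc n) \<noteq> g n then {n} else {})"
    by (auto simp: less_Suc_eq)
  show ?case
    unfolding split using IH mono by (auto simp: card_insert_if)
qed

lemma valid_run_mono:
  assumes "valid_run rs"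
  shows "mono rs"
  using assms unfolding valid_run_def mono_iff_le_Suc by (metis le_SucI order_refl)

lemma valid_run_less_after_decoding:
  assumes "valid_run rs" "rs (Suc t) \<noteq> rs t" "t < t'"
  shows "rs t < rs t'"
proof -
  have "rs (Suc t) = Suc (rs t)"
    using assms(1,2) unfolding valid_run_def by blast
  moreover have "rs (Suc t) \<le> rs t'"
    using valid_run_mono[OF assms(1)] assms(3) by (simp add: monoD)
  ultimately show ?thesis by simp
qed

lemma feedback_count_le_card_deg_changes:
  assumes "valid_run rs" "\<forall>t<T. rs t < n"
  shows "feedback_count k rs T \<le> card {r. r < n \<and> deg k (Suc r) \<noteq> deg k r}"
proof -
  define S where "S = {t. t < T \<and> deg k (rs (Suc t)) \<noteq> deg k (rs t)}"
  have decoding: "rs (Suc t) = Suc (rs t)" if "t \<in> S" for t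
    using that assms(1) unfolding S_def valid_run_def by force
  have "inj_on rs S"
  proof (rule linorder_inj_onI')
    fix t t' assume "t \<in> S" "t' \<in> S" "t < t'"
    then show "rs t \<noteq> rs t'"
      using valid_run_less_after_decoding[OF assms(1)] decoding by (metis less_irrefl n_not_Suc_n)
  qed
  moreover have "rs ` S \<subseteq> {r. r < n \<and> deg k (Suc r) \<noteq> deg k r}"
    using assms(2) decoding unfolding S_def by auto
  ultimately have "card S \<le> card {r. r < n \<and> deg k (Suc r) \<noteq> deg k r}"
    by (intro card_inj_on_le) auto
  then show ?thesis
    unfolding feedback_count_def S_def .
qed

lemma feedback_count_le_count_bound:
  assumes "valid_run rs" "\<forall>t<T. rs t < n"
  shows "feedback_count k rs T \<le> n"
proof -
  have "card {r. r < n \<and> deg k (Suc r) \<noteq> deg k r} \<le> card {..<n}"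
    by (intro card_mono) auto
  then show ?thesis
    using feedback_count_le_card_deg_changes[OF assms, of k] by (metis card_lessThan le_trans)
qed

lemma deg_le_div: "r < k \<Longrightarrow> deg k r \<le> (k + 1) div (k - r)"
  unfolding deg_def by auto

lemma mono_on_deg: "mono_on {..<k} (deg k)"
proof (rule mono_onI)
  fix r r' assume "r \<in> {..<k}" "r' \<in> {..<k}" "r \<le> r'"
  then consider "Suc r' < k" | "r = r'" | "Suc r' = k" "r < r'"
    by fastforce
  then show "deg k r \<le> deg k r'"
  proof cases
    case 1
    then have "(k + 1) div (k - r) \<le> (k + 1) div (k - r')"
      using \<open>r \<le> r'\<close> by (intro div_le_mono2) auto
    then show ?thesis
      using 1 \<open>r \<le> r'\<close> unfolding deg_def by auto
  next
    case 2
    then show ?thesis by simp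
  next
    case 3
    have "(k + 1) div (k - r) \<le> (k + 1) div 2"
      using 3 by (intro div_le_mono2) auto
    also have "\<dots> \<le> k"
      using 3 by linarith
    finally show ?thesis
      using 3 unfolding deg_def by simp
  qed
qed

lemma feedback_count_le_deg:
  assumes "valid_run rs" "\<forall>t<T. rs t < n" "n < k"
  shows "feedback_count k rs T \<le> deg k n"
proof -
  have "mono_on {..n} (deg k)"
    using assms(3) by (auto intro: mono_on_subset[OF mono_on_deg])
  then have "card {r. r < n \<and> deg k (Suc r) \<noteq> deg k r} \<le> deg k n"
    using card_changes_le_of_mono_on by (metis diff_le_self le_trans)
  then show ?thesis
    using feedback_count_le_card_deg_changes[OF assms(1,2), of k] by linarith
qed

lemma deg_le_of_gap:
  fixes \<gamma> :: real
  assumes "0 < \<gamma>" "3 \<le> \<gamma> * k" "real r < (1 - \<gamma>) * k + 1"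
  shows "r < k" "real (deg k r) \<le> 3 / \<gamma>"
proof -
  have k_pos: "0 < real k"
    using assms(1,2) by (auto intro: ccontr)
  have gap: "(2 / 3) * (\<gamma> * k) \<le> real (k - r)" and "r < k"
    using assms(2,3) by (simp_all add: of_nat_diff algebra_simps)
  then show "r < k" by simp
  have "real (deg k r) \<le> real ((k + 1) div (k - r))"
    using deg_le_div[OF \<open>r < k\<close>] by simp
  also have "\<dots> \<le> real (k + 1) / real (k - r)"
    by (rule of_nat_div_le_of_nat)
  also have "\<dots> \<le> real (2 * k) / ((2 / 3) * (\<gamma> * k))"
    using gap k_pos assms(1) by (intro frac_le) auto
  also have "\<dots> = 3 / \<gamma>"
    using k_pos by simp
  finally show "real (deg k r) \<le> 3 / \<gamma>" .
qed

theorem lemma4: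
  fixes \<gamma> :: real
  assumes "\<gamma> > 0"
  shows "\<exists>C::nat. \<forall>(k::nat) (rs::nat \<Rightarrow> nat) (T::nat).
           valid_run rs \<longrightarrow> (\<forall>t<T. real (rs t) < (1 - \<gamma>) * real k) \<longrightarrow>
           feedback_count k rs T \<le> C"
proof (intro exI allI impI)
  fix k rs T
  assume run: "valid_run rs" and below: "\<forall>t<T. real (rs t) < (1 - \<gamma>) * real k"
  define n where "n = nat \<lceil>(1 - \<gamma>) * k\<rceil>"
  have below_n: "\<forall>t<T. rs t < n"
    using below unfolding n_def by (simp add: zless_nat_eq_int_zless less_ceiling_iff)
  have "real (feedback_count k rs T) \<le> 3 / \<gamma>"
  proof (cases "3 \<le> \<gamma> * k \<and> n \<noteq> 0")
    \<comment> \<open>for n = 0 the bound n < (1 - \<gamma>) k + 1 can fail, as nat truncates negative ceilings\<close>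
    case True
    then have "real n < (1 - \<gamma>) * k + 1"
      using ceiling_correct[of "(1 - \<gamma>) * k"] unfolding n_def by simp
    with True have "n < k" and "real (deg k n) \<le> 3 / \<gamma>"
      using deg_le_of_gap[OF assms] by auto
    moreover have "feedback_count k rs T \<le> deg k n" if "n < k"
      using feedback_count_le_deg[OF run below_n that] .
    ultimately show ?thesis
      by (meson of_nat_le_iff order_trans)
  next
    case False
    have "n \<le> k" and "n = 0 \<or> real k < 3 / \<gamma>"
      using False assms unfolding n_def by (auto simp: algebra_simps field_simps)
    moreover have "feedback_count k rs T \<le> n"
      by (rule feedback_count_le_count_bound[OF run below_n])
    ultimately show ?thesis
      using assms by (auto dest!: of_nat_mono[where 'a = real])
  qed
  then show "feedback_count k rs T \<le> nat \<lceil>3 / \<gamma>\<rceil>"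
    using real_nat_ceiling_ge[of "3 / \<gamma>"] by (metis of_nat_le_iff order_trans)
qed

end
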